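(* Let $T\in\mathcal{T}_\pi$, let $u,v\in V(T)$ be distinct vertices, and let $ux_1,\ldots,ux_k\in E(T)$ ($k\ge1$) be edges such that none of the $x_i$ lies on the path $P_{uv}$. Let $T'$ be obtained from $T$ by replacing the edges $ux_1,\ldots,ux_k$ by the edges $vx_1,\ldots,vx_k$. If $f$ is an eigenvector of $L(T)$ corresponding to $\lambda(T)$ with $|f(u)|\le|f(v)|$, then $\lambda(T')>\lambda(T)$.
   Context: For a graph $G=(V,E)$ the Laplacian is $L(G)=D(G)-A(G)$ ($D$ the diagonal degree matrix, $A$ the adjacency matrix), and $\lambda(G)$ denotes its largest eigenvalue. $\mathcal{T}_\pi$ is the set of all trees with degree sequence $\pi$. $P_{uv}$ denotes the (unique) path in the tree between vertices $u$ and $v$. *)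

theory Defs
  imports Complex_Main
begin

definition simple_graph :: "'a set \<Rightarrow> 'a set set \<Rightarrow> bool" where
  "simple_graph V E \<longleftrightarrow> finite V \<and>
     (\<forall>e\<in>E. \<exists>x y. x \<noteq> y \<and> x \<in> V \<and> y \<in> V \<and> e = {x, y})"

definition adj :: "'a set set \<Rightarrow> 'a \<Rightarrow> 'a \<Rightarrow> bool" where
  "adj E x y \<longleftrightarrow> {x, y} \<in> E"

definition is_path :: "'a set set \<Rightarrow> 'a list \<Rightarrow> bool" where
  "is_path E ps \<longleftrightarrow> ps \<noteq> [] \<and> distinct ps \<and>
     (\<forall>i. Suc i < length ps \<longrightarrow> adj E (ps ! i) (ps ! Suc i))"

definition connected_graph :: "'a set \<Rightarrow> 'a set set \<Rightarrow> bool" where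
  "connected_graph V E \<longleftrightarrow>
     (\<forall>x\<in>V. \<forall>y\<in>V. \<exists>ps. is_path E ps \<and> hd ps = x \<and> last ps = y)"

definition acyclic_graph :: "'a set set \<Rightarrow> bool" where
  "acyclic_graph E \<longleftrightarrow>
     \<not> (\<exists>ps. is_path E ps \<and> length ps \<ge> 3 \<and> adj E (last ps) (hd ps))"

definition is_tree :: "'a set \<Rightarrow> 'a set set \<Rightarrow> bool" where
  "is_tree V E \<longleftrightarrow> simple_graph V E \<and> V \<noteq> {} \<and> connected_graph V E \<and> acyclic_graph E"

text \<open>Vertex x lies on the (unique, in a tree) path P_uv.\<close>
definition on_path :: "'a set set \<Rightarrow> 'a \<Rightarrow> 'a \<Rightarrow> 'a \<Rightarrow> bool" where
  "on_path E u v x \<longleftrightarrow> (\<exists>ps. is_path E ps \<and> hd ps = u \<and> last ps = v \<and> x \<in> set ps)"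

definition degree :: "'a set set \<Rightarrow> 'a \<Rightarrow> nat" where
  "degree E x = card {y. {x, y} \<in> E}"

definition laplacian :: "'a set \<Rightarrow> 'a set set \<Rightarrow> ('a \<Rightarrow> real) \<Rightarrow> 'a \<Rightarrow> real" where
  "laplacian V E f x = real (degree E x) * f x - (\<Sum>y\<in>{y\<in>V. adj E x y}. f y)"

definition lap_eigenvector :: "'a set \<Rightarrow> 'a set set \<Rightarrow> real \<Rightarrow> ('a \<Rightarrow> real) \<Rightarrow> bool" where
  "lap_eigenvector V E \<mu> f \<longleftrightarrow> (\<forall>x. x \<notin> V \<longrightarrow> f x = 0) \<and> (\<exists>x\<in>V. f x \<noteq> 0) \<and>
     (\<forall>x\<in>V. laplacian V E f x = \<mu> * f x)"

definition lap_eigenvalues :: "'a set \<Rightarrow> 'a set set \<Rightarrow> real set" where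
  "lap_eigenvalues V E = {\<mu>. \<exists>f. lap_eigenvector V E \<mu> f}"

definition lap_max_eig :: "'a set \<Rightarrow> 'a set set \<Rightarrow> real" where
  "lap_max_eig V E = Max (lap_eigenvalues V E)"

end

theory Submission
  imports Defs "HOL-Analysis.Analysis"
begin

(*
  The proof is variational.  Writing Q(h) for the sum of (h y - h z)^2 over ordered pairs of
  adjacent vertices (twice the Laplacian quadratic form), the Rayleigh principle
  Q(h) <= 2 lambda |h|^2 holds, with equality only for eigenvectors of lambda.  Let g be f with
  the branch hanging at each x_i multiplied by a sign chosen so that f(v) and g(x_i) have
  opposite signs.  Then |g| = |f| and Q'(g) >= Q(f) in the new tree T'.  If lambda(T') <= lambda(T),
  g attains the Rayleigh bound for T' and is an eigenvector of T' for lambda(T); comparing the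
  eigen-equations of f in T and g in T' at u and at the x_i gives a contradiction.
*)

section \<open>The Laplacian quadratic form of a finite simple graph\<close>

text \<open>Neighbourhoods, ordered pairs of adjacent vertices ("arcs"), and the quadratic form
  Q(h) = sum over arcs (y,z) of (h y - h z)^2, which is twice the Laplacian form h^T L h; B is its
  polarisation.  Vectors are real functions on the vertex type that vanish outside V.\<close>
definition nbrs :: "'a set \<Rightarrow> 'a set set \<Rightarrow> 'a \<Rightarrow> 'a set" where
  "nbrs V E x = {y\<in>V. adj E x y}"
definition arcs :: "'a set \<Rightarrow> 'a set set \<Rightarrow> ('a \<times> 'a) set" where
  "arcs V E = {(y,z). y\<in>V \<and> z\<in>V \<and> adj E y z}"
definition quad_form :: "'a set \<Rightarrow> 'a set set \<Rightarrow> ('a \<Rightarrow> real) \<Rightarrow> real" where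
  "quad_form V E h = (\<Sum>p\<in>arcs V E. (h (fst p) - h (snd p))^2)"
definition bilin_form :: "'a set \<Rightarrow> 'a set set \<Rightarrow> ('a \<Rightarrow> real) \<Rightarrow> ('a \<Rightarrow> real) \<Rightarrow> real" where
  "bilin_form V E g w = (\<Sum>p\<in>arcs V E. (g (fst p) - g (snd p)) * (w (fst p) - w (snd p)))"
definition norm2 :: "'a set \<Rightarrow> ('a \<Rightarrow> real) \<Rightarrow> real" where
  "norm2 V h = (\<Sum>x\<in>V. (h x)^2)"
definition dot :: "'a set \<Rightarrow> ('a \<Rightarrow> real) \<Rightarrow> ('a \<Rightarrow> real) \<Rightarrow> real" where
  "dot V g w = (\<Sum>x\<in>V. g x * w x)"
definition supported :: "'a set \<Rightarrow> ('a \<Rightarrow> real) \<Rightarrow> bool" where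
  "supported V h = (\<forall>x. x \<notin> V \<longrightarrow> h x = 0)"

lemma adj_sym: "adj E x y = adj E y x"
  by (simp add: adj_def insert_commute)

lemma simple_graph_edge: "simple_graph V E \<Longrightarrow> {x,y} \<in> E \<Longrightarrow> x \<in> V \<and> y \<in> V \<and> x \<noteq> y"
  unfolding simple_graph_def by (metis doubleton_eq_iff)

lemma laplacian_nbrs:
  assumes "simple_graph V E"
  shows "laplacian V E h x = (\<Sum>y\<in>nbrs V E x. h x - h y)"
proof -
  have "{y. {x, y} \<in> E} = nbrs V E x"
    using simple_graph_edge[OF assms] by (auto simp: nbrs_def adj_def)
  then have "Defs.degree E x = card (nbrs V E x)" by (simp add: Defs.degree_def)
  moreover have "{y\<in>V. adj E x y} = nbrs V E x" by (simp add: nbrs_def)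
  ultimately show ?thesis
    by (simp add: laplacian_def sum_subtractf)
qed

lemma finite_arcs: "finite V \<Longrightarrow> finite (arcs V E)"
  by (rule finite_subset[of _ "V \<times> V"]) (auto simp: arcs_def)

lemma sum_arcs_swap:
  assumes "finite V"
  shows "(\<Sum>p\<in>arcs V E. \<phi> p) = (\<Sum>p\<in>arcs V E. \<phi> (snd p, fst p))"
proof -
  have "(\<Sum>p\<in>arcs V E. \<phi> (snd p, fst p)) = (\<Sum>p\<in>prod.swap ` arcs V E. \<phi> p)"
    by (subst sum.reindex) (auto simp: comp_def prod.swap_def)
  moreover have "prod.swap ` arcs V E = arcs V E"
    by (auto simp: arcs_def adj_sym image_iff)
  ultimately show ?thesis by simp
qed

lemma sum_arcs_nbrs:
  assumes "finite V"
  shows "(\<Sum>p\<in>arcs V E. \<phi> p) = (\<Sum>y\<in>V. \<Sum>z\<in>nbrs V E y. \<phi> (y,z))"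
proof -
  have "arcs V E = Sigma V (nbrs V E)" by (auto simp: arcs_def nbrs_def)
  moreover have "(\<Sum>y\<in>V. \<Sum>z\<in>nbrs V E y. \<phi> (y,z)) = (\<Sum>p\<in>Sigma V (nbrs V E). \<phi> p)"
    by (subst sum.Sigma) (auto simp: nbrs_def assms split_def)
  ultimately show ?thesis by simp
qed

lemma bilin_form_laplacian:
  assumes sg: "simple_graph V E"
  shows "bilin_form V E g w = 2 * (\<Sum>y\<in>V. w y * laplacian V E g y)"
proof -
  have fin: "finite V" using sg simple_graph_def by auto
  have "bilin_form V E g w = (\<Sum>p\<in>arcs V E. (g (fst p) - g (snd p)) * w (fst p))
       - (\<Sum>p\<in>arcs V E. (g (fst p) - g (snd p)) * w (snd p))"
    by (simp add: bilin_form_def right_diff_distrib sum_subtractf)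
  also have "(\<Sum>p\<in>arcs V E. (g (fst p) - g (snd p)) * w (snd p))
      = - (\<Sum>p\<in>arcs V E. (g (fst p) - g (snd p)) * w (fst p))"
    by (subst sum_arcs_swap[OF fin]) (simp add: sum_negf[symmetric] algebra_simps)
  finally have "bilin_form V E g w = 2 * (\<Sum>p\<in>arcs V E. (g (fst p) - g (snd p)) * w (fst p))" by simp
  also have "(\<Sum>p\<in>arcs V E. (g (fst p) - g (snd p)) * w (fst p)) = (\<Sum>y\<in>V. w y * laplacian V E g y)"
    by (simp add: sum_arcs_nbrs[OF fin] laplacian_nbrs[OF sg] sum_distrib_left mult.commute)
  finally show ?thesis .
qed

lemma quad_form_bilin: "quad_form V E h = bilin_form V E h h"
  by (simp add: quad_form_def bilin_form_def power2_eq_square)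

lemma quad_form_add: "quad_form V E (\<lambda>x. g x + t * w x) = quad_form V E g + 2 * t * bilin_form V E g w + t^2 * quad_form V E w"
proof -
  have "quad_form V E (\<lambda>x. g x + t * w x) = (\<Sum>p\<in>arcs V E. (g (fst p) - g (snd p))^2 + 2 * t * ((g (fst p) - g (snd p)) * (w (fst p) - w (snd p))) + t^2 * (w (fst p) - w (snd p))^2)"
    unfolding quad_form_def by (rule sum.cong) (simp_all add: power2_eq_square algebra_simps)
  then show ?thesis by (simp add: quad_form_def bilin_form_def sum.distrib sum_distrib_left)
qed

lemma norm2_add: "norm2 V (\<lambda>x. g x + t * w x) = norm2 V g + 2 * t * dot V g w + t^2 * norm2 V w"
proof -
  have "norm2 V (\<lambda>x. g x + t * w x) = (\<Sum>x\<in>V. (g x)^2 + 2 * t * (g x * w x) + t^2 * (w x)^2)"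
    unfolding norm2_def by (rule sum.cong) (simp_all add: power2_eq_square algebra_simps)
  then show ?thesis by (simp add: norm2_def dot_def sum.distrib sum_distrib_left)
qed

lemma linear_term_vanishes:
  fixes a b :: real
  assumes "\<forall>t. a * t + b * t^2 \<le> 0"
  shows "a = 0"
proof (rule ccontr)
  assume a: "a \<noteq> 0"
  define c where "c = 2 * (\<bar>b\<bar> + 1)"
  define t where "t = a / c"
  have c: "c > 0" by (simp add: c_def)
  have aa: "a * a > 0" using a by (auto simp: zero_less_mult_iff linorder_neq_iff)
  have at: "a * t > 0" using aa c by (simp add: t_def)
  have t2: "\<bar>b\<bar> * t^2 = (\<bar>b\<bar> / c) * (a * t)" by (simp add: t_def power2_eq_square)
  have bc: "\<bar>b\<bar> / c \<le> 1/2" using c by (simp add: c_def field_simps)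
  have "\<bar>b\<bar> * t^2 \<le> (1/2) * (a * t)" unfolding t2 using bc at by (intro mult_right_mono) auto
  moreover have "b * t^2 \<ge> - \<bar>b\<bar> * t^2"
  proof -
    have "- \<bar>b\<bar> \<le> b" by simp
    then have "- \<bar>b\<bar> * t^2 \<le> b * t^2" by (rule mult_right_mono) simp
    then show ?thesis by simp
  qed
  ultimately have "a * t + b * t^2 > 0" using at by linarith
  with assms show False by (meson not_le)
qed

text \<open>First variation: a vector attaining the Rayleigh bound Q(h) <= 2 mu |h|^2 satisfies
  the eigen-equation L g = mu g at every vertex.\<close>
lemma extremal_is_eigen:
  assumes sg: "simple_graph V E" and sg0: "supported V g"
    and bound: "\<forall>h. supported V h \<longrightarrow> quad_form V E h \<le> 2 * \<mu> * norm2 V h"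
    and eq: "quad_form V E g = 2 * \<mu> * norm2 V g"
    and aV: "a \<in> V"
  shows "laplacian V E g a = \<mu> * g a"
proof -
  have fin: "finite V" using sg simple_graph_def by auto
  define w where "w = (\<lambda>y. if y = a then 1 else 0::real)"
  have "\<forall>t. (2 * bilin_form V E g w - 4 * \<mu> * dot V g w) * t + (quad_form V E w - 2 * \<mu> * norm2 V w) * t^2 \<le> 0"
  proof
    fix t
    have "supported V (\<lambda>x. g x + t * w x)" using sg0 aV by (auto simp: supported_def w_def)
    then have "quad_form V E (\<lambda>x. g x + t * w x) \<le> 2 * \<mu> * norm2 V (\<lambda>x. g x + t * w x)" using bound by blast
    then show "(2 * bilin_form V E g w - 4 * \<mu> * dot V g w) * t + (quad_form V E w - 2 * \<mu> * norm2 V w) * t^2 \<le> 0"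
      unfolding quad_form_add norm2_add using eq by (simp add: algebra_simps)
  qed
  then have "2 * bilin_form V E g w - 4 * \<mu> * dot V g w = 0" by (rule linear_term_vanishes)
  moreover have "bilin_form V E g w = 2 * laplacian V E g a"
  proof -
    have "(\<Sum>y\<in>V. w y * laplacian V E g y) = (\<Sum>y\<in>V. if y = a then laplacian V E g y else 0)"
      by (rule sum.cong) (auto simp: w_def)
    then show ?thesis unfolding bilin_form_laplacian[OF sg] using fin aV by simp
  qed
  moreover have "dot V g w = g a"
  proof -
    have "(\<Sum>y\<in>V. g y * w y) = (\<Sum>y\<in>V. if y = a then g y else 0)"
      by (rule sum.cong) (auto simp: w_def)
    then show ?thesis unfolding dot_def using fin aV by simp
  qed
  ultimately show ?thesis by simp
qed

lemma eigen_quad_form: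
  assumes sg: "simple_graph V E" and e: "\<forall>x\<in>V. laplacian V E f x = \<mu> * f x"
  shows "quad_form V E f = 2 * \<mu> * norm2 V f"
  unfolding quad_form_bilin bilin_form_laplacian[OF sg] norm2_def using e
  by (simp add: sum_distrib_left power2_eq_square algebra_simps)

lemma eigen_bilin_form:
  assumes sg: "simple_graph V E" and e: "\<forall>x\<in>V. laplacian V E f x = \<mu> * f x"
  shows "bilin_form V E f g = 2 * \<mu> * dot V g f"
  unfolding bilin_form_laplacian[OF sg] dot_def using e
  by (simp add: sum_distrib_left algebra_simps)

lemma bilin_form_sym: "bilin_form V E f g = bilin_form V E g f"
  by (simp add: bilin_form_def mult.commute)

lemma dot_sym: "dot V f g = dot V g f"
  by (simp add: dot_def mult.commute)

lemma eigen_orthogonal: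
  assumes sg: "simple_graph V E"
    and f: "\<forall>x\<in>V. laplacian V E f x = \<mu> * f x"
    and g: "\<forall>x\<in>V. laplacian V E g x = \<nu> * g x"
    and ne: "\<mu> \<noteq> \<nu>"
  shows "dot V f g = 0"
proof -
  have 1: "bilin_form V E f g = 2 * \<mu> * dot V g f" by (rule eigen_bilin_form[OF sg f])
  have 2: "bilin_form V E g f = 2 * \<nu> * dot V f g" by (rule eigen_bilin_form[OF sg g])
  have "dot V g f = 0 \<or> \<mu> = \<nu>" using 1 2 bilin_form_sym[of V E f g] dot_sym[of V f g] by auto
  then show ?thesis using ne dot_sym[of V f g] by auto
qed

text \<open>Bessel's inequality for the coordinate vector of x: the squared x-coordinates of an
  orthonormal family sum to at most 1.\<close>
lemma bessel_pointwise:
  assumes fin: "finite V" and finF: "finite F"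
    and n1: "\<forall>m\<in>F. norm2 V (e m) = 1"
    and orth: "\<forall>m\<in>F. \<forall>n\<in>F. m \<noteq> n \<longrightarrow> dot V (e m) (e n) = 0"
    and xV: "x \<in> V"
  shows "(\<Sum>m\<in>F. (e m x)^2) \<le> 1"
proof -
  define c where "c m = e m x" for m
  define S where "S y = (\<Sum>m\<in>F. c m * e m y)" for y
  define d where "d y = (if y = x then 1 else 0::real)" for y
  have ipe: "dot V (e m) (e n) = (if m = n then 1 else 0)" if "m \<in> F" "n \<in> F" for m n
    using that n1 orth by (auto simp: norm2_def dot_def power2_eq_square)
  have "0 \<le> (\<Sum>y\<in>V. (d y - S y)^2)" by (simp add: sum_nonneg)
  also have "(\<Sum>y\<in>V. (d y - S y)^2) = (\<Sum>y\<in>V. (d y)^2 - 2 * (d y * S y) + (S y)^2)"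
    by (rule sum.cong) (simp_all add: power2_diff)
  also have "\<dots> = (\<Sum>y\<in>V. (d y)^2) - 2 * (\<Sum>y\<in>V. d y * S y) + (\<Sum>y\<in>V. (S y)^2)"
    by (simp only: sum.distrib sum_subtractf sum_distrib_left)
  finally have main: "0 \<le> (\<Sum>y\<in>V. (d y)^2) - 2 * (\<Sum>y\<in>V. d y * S y) + (\<Sum>y\<in>V. (S y)^2)" .
  have A: "(\<Sum>y\<in>V. (d y)^2) = 1"
  proof -
    have "(\<Sum>y\<in>V. (d y)^2) = (\<Sum>y\<in>V. if y = x then 1 else 0)" by (rule sum.cong) (auto simp: d_def)
    then show ?thesis using fin xV by simp
  qed
  have B: "(\<Sum>y\<in>V. d y * S y) = (\<Sum>m\<in>F. (c m)^2)"
  proof -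
    have "(\<Sum>y\<in>V. d y * S y) = (\<Sum>y\<in>V. if y = x then S y else 0)" by (rule sum.cong) (auto simp: d_def)
    then show ?thesis using fin xV by (simp add: S_def c_def power2_eq_square)
  qed
  have C: "(\<Sum>y\<in>V. (S y)^2) = (\<Sum>m\<in>F. (c m)^2)"
  proof -
    have "(\<Sum>y\<in>V. (S y)^2) = (\<Sum>y\<in>V. \<Sum>m\<in>F. \<Sum>n\<in>F. c m * c n * (e m y * e n y))"
    proof (rule sum.cong[OF refl])
      fix y
      have "(S y)^2 = (\<Sum>m\<in>F. c m * e m y) * (\<Sum>n\<in>F. c n * e n y)" by (simp add: S_def power2_eq_square)
      also have "\<dots> = (\<Sum>m\<in>F. \<Sum>n\<in>F. (c m * e m y) * (c n * e n y))" by (rule sum_product)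
      also have "\<dots> = (\<Sum>m\<in>F. \<Sum>n\<in>F. c m * c n * (e m y * e n y))" by (simp add: mult_ac)
      finally show "(S y)^2 = (\<Sum>m\<in>F. \<Sum>n\<in>F. c m * c n * (e m y * e n y))" .
    qed
    also have "\<dots> = (\<Sum>m\<in>F. \<Sum>y\<in>V. \<Sum>n\<in>F. c m * c n * (e m y * e n y))"
      by (rule sum.swap)
    also have "\<dots> = (\<Sum>m\<in>F. \<Sum>n\<in>F. \<Sum>y\<in>V. c m * c n * (e m y * e n y))"
      by (rule sum.cong[OF refl], rule sum.swap)
    also have "\<dots> = (\<Sum>m\<in>F. \<Sum>n\<in>F. c m * c n * dot V (e m) (e n))"
      by (simp add: dot_def sum_distrib_left)
    also have "\<dots> = (\<Sum>m\<in>F. \<Sum>n\<in>F. if m = n then c m * c n else 0)"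
      by (rule sum.cong[OF refl], rule sum.cong[OF refl]) (simp add: ipe)
    also have "\<dots> = (\<Sum>m\<in>F. (c m)^2)"
      using finF by (simp add: power2_eq_square)
    finally show ?thesis .
  qed
  from main A B C have "(\<Sum>m\<in>F. (c m)^2) \<le> 1" by linarith
  then show ?thesis by (simp add: c_def)
qed

lemma orthonormal_card_le:
  assumes fin: "finite V" and finF: "finite F"
    and n1: "\<forall>m\<in>F. norm2 V (e m) = 1"
    and orth: "\<forall>m\<in>F. \<forall>n\<in>F. m \<noteq> n \<longrightarrow> dot V (e m) (e n) = 0"
  shows "card F \<le> card V"
proof -
  have "real (card F) = (\<Sum>m\<in>F. norm2 V (e m))" using n1 by simp
  also have "\<dots> = (\<Sum>x\<in>V. \<Sum>m\<in>F. (e m x)^2)" unfolding norm2_def by (rule sum.swap)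
  also have "\<dots> \<le> (\<Sum>x\<in>V. 1)" by (rule sum_mono) (rule bessel_pointwise[OF fin finF n1 orth])
  also have "\<dots> = real (card V)" by simp
  finally show ?thesis by simp
qed

lemma norm2_pos: "finite V \<Longrightarrow> x \<in> V \<Longrightarrow> f x \<noteq> 0 \<Longrightarrow> norm2 V f > 0"
  unfolding norm2_def by (rule sum_pos2[of V x]) auto

lemma norm2_scale: "norm2 V (\<lambda>x. a * f x) = a^2 * norm2 V f"
  by (simp add: norm2_def power_mult_distrib sum_distrib_left)

lemma dot_scale: "dot V (\<lambda>x. a * f x) (\<lambda>x. b * g x) = a * b * dot V f g"
  by (simp add: dot_def sum_distrib_left algebra_simps)

lemma quad_form_scale: "quad_form V E (\<lambda>x. a * f x) = a^2 * quad_form V E f"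
proof -
  have "quad_form V E (\<lambda>x. a * f x) = (\<Sum>p\<in>arcs V E. a^2 * (f (fst p) - f (snd p))^2)"
    unfolding quad_form_def by (rule sum.cong) (simp_all add: power2_eq_square algebra_simps)
  then show ?thesis by (simp add: quad_form_def sum_distrib_left)
qed

text \<open>A graph has finitely many Laplacian eigenvalues, since normalised eigenvectors for
  distinct eigenvalues form an orthonormal family; so lap_max_eig is a genuine maximum.\<close>
lemma finite_lap_eigenvalues:
  assumes sg: "simple_graph V E"
  shows "finite (lap_eigenvalues V E)"
proof (rule ccontr)
  assume inf: "infinite (lap_eigenvalues V E)"
  have fin: "finite V" using sg simple_graph_def by auto
  obtain F where F: "F \<subseteq> lap_eigenvalues V E" "finite F" "card F = Suc (card V)"
    using infinite_arbitrarily_large[OF inf] by blast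
  define ev where "ev m = (SOME f. lap_eigenvector V E m f)" for m
  have ev: "lap_eigenvector V E m (ev m)" if "m \<in> F" for m
  proof -
    have "\<exists>f. lap_eigenvector V E m f" using F(1) that unfolding lap_eigenvalues_def by blast
    then show ?thesis unfolding ev_def by (rule someI_ex)
  qed
  define e where "e m = (\<lambda>x. (1 / sqrt (norm2 V (ev m))) * ev m x)" for m
  have pos: "norm2 V (ev m) > 0" if mF: "m \<in> F" for m
  proof -
    obtain x where "x \<in> V" "ev m x \<noteq> 0" using ev[OF mF] unfolding lap_eigenvector_def by blast
    then show ?thesis using norm2_pos[OF fin] by blast
  qed
  have "\<forall>m\<in>F. norm2 V (e m) = 1"
  proof
    fix m assume m: "m \<in> F"
    have "norm2 V (e m) = (1 / sqrt (norm2 V (ev m)))^2 * norm2 V (ev m)" unfolding e_def by (rule norm2_scale)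
    also have "\<dots> = 1" using pos[OF m] by (simp add: power_divide)
    finally show "norm2 V (e m) = 1" .
  qed
  moreover have "\<forall>m\<in>F. \<forall>n\<in>F. m \<noteq> n \<longrightarrow> dot V (e m) (e n) = 0"
  proof (intro ballI impI)
    fix m n assume m: "m \<in> F" and n: "n \<in> F" and mn: "m \<noteq> n"
    have "dot V (ev m) (ev n) = 0"
      using eigen_orthogonal[OF sg _ _ mn] ev[OF m] ev[OF n] unfolding lap_eigenvector_def by blast
    then show "dot V (e m) (e n) = 0" unfolding e_def dot_scale by simp
  qed
  ultimately have "card F \<le> card V" using orthonormal_card_le[OF fin F(2)] by blast
  with F(3) show False by simp
qed

lemma continuous_norm2: "continuous_on UNIV (\<lambda>h::'a \<Rightarrow> real. norm2 V h)"
  unfolding norm2_def by (intro continuous_intros continuous_on_product_coordinates)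

lemma continuous_quad_form: "continuous_on UNIV (\<lambda>h::'a \<Rightarrow> real. quad_form V E h)"
  unfolding quad_form_def by (intro continuous_intros continuous_on_product_coordinates)

lemma quad_form_attains_max:
  fixes V :: "'a set"
  assumes fin: "finite V" and ne: "V \<noteq> {}"
  shows "\<exists>g. supported V g \<and> norm2 V g = 1 \<and> (\<forall>h. supported V h \<and> norm2 V h = 1 \<longrightarrow> quad_form V E h \<le> quad_form V E g)"
proof -
  define Sx where "Sx x = (if x \<in> V then {-1..1} else {0::real})" for x
  define K where "K = Pi\<^sub>E UNIV Sx"
  have "compactin (product_topology (\<lambda>i. euclidean) UNIV) K"
    unfolding K_def compactin_PiE by (auto simp: Sx_def)
  then have cK: "compact K" by (simp add: euclidean_product_topology)
  define S0 where "S0 = K \<inter> {h. norm2 V h = 1}"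
  have "closed {h::'a\<Rightarrow>real. norm2 V h = 1}"
    by (rule closed_Collect_eq[OF continuous_norm2 continuous_on_const])
  then have cS: "compact S0" unfolding S0_def using cK by blast
  have memS: "h \<in> S0" if "supported V h" "norm2 V h = 1" for h
  proof -
    have "h x \<in> Sx x" for x
    proof (cases "x \<in> V")
      case True
      have "(h x)^2 \<le> norm2 V h" unfolding norm2_def by (rule member_le_sum[OF True]) (auto simp: fin)
      then have "(h x)^2 \<le> 1" using that by simp
      then have "\<bar>h x\<bar> \<le> 1" by (simp add: abs_square_le_1)
      then show ?thesis using True by (simp add: Sx_def abs_le_iff)
    next
      case False
      then show ?thesis using that by (simp add: Sx_def supported_def)
    qed
    then show ?thesis using that by (simp add: S0_def K_def PiE_UNIV_domain)
  qed
  have suppS: "supported V h" if "h \<in> S0" for h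
    using that by (auto simp: S0_def K_def Sx_def supported_def PiE_iff split: if_splits)
  obtain x0 where x0: "x0 \<in> V" using ne by blast
  define d where "d y = (if y = x0 then 1 else 0::real)" for y
  have "norm2 V d = 1"
  proof -
    have "norm2 V d = (\<Sum>y\<in>V. if y = x0 then 1 else 0)" unfolding norm2_def by (rule sum.cong) (auto simp: d_def)
    then show ?thesis using fin x0 by simp
  qed
  moreover have "supported V d" using x0 by (simp add: supported_def d_def)
  ultimately have "S0 \<noteq> {}" using memS by blast
  moreover have "continuous_on S0 (quad_form V E)" using continuous_quad_form continuous_on_subset by blast
  ultimately obtain g where g: "g \<in> S0" "\<forall>y\<in>S0. quad_form V E y \<le> quad_form V E g"
    using continuous_attains_sup[OF cS] by blast
  show ?thesis
    apply (rule exI[of _ g])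
    using g suppS memS by (auto simp: S0_def)
qed

lemma quad_form_norm2_zero:
  assumes fin: "finite V" and s: "supported V h" and n: "norm2 V h = 0"
  shows "quad_form V E h = 0"
proof -
  have "\<forall>x\<in>V. (h x)^2 = 0"
  proof
    fix x assume x: "x \<in> V"
    have "(h x)^2 \<le> norm2 V h" unfolding norm2_def by (rule member_le_sum[OF x]) (auto simp: fin)
    then show "(h x)^2 = 0" using n by (smt (verit) zero_le_power2)
  qed
  then have z: "\<forall>x\<in>V. h x = 0" by simp
  show ?thesis unfolding quad_form_def
  proof (rule sum.neutral, rule ballI)
    fix p assume "p \<in> arcs V E"
    then have "fst p \<in> V" "snd p \<in> V" by (auto simp: arcs_def)
    then show "(h (fst p) - h (snd p))^2 = 0" using z by simp
  qed
qed

lemma eigenvector_norm2_pos: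
  assumes "finite V" "lap_eigenvector V E m f"
  shows "norm2 V f > 0"
proof -
  obtain x where "x \<in> V" "f x \<noteq> 0" using assms(2) unfolding lap_eigenvector_def by blast
  then show ?thesis using norm2_pos[OF assms(1)] by blast
qed

lemma quad_form_bound_from_sphere:
  assumes fin: "finite V"
    and sphere: "\<forall>h. supported V h \<and> norm2 V h = 1 \<longrightarrow> quad_form V E h \<le> c"
    and h: "supported V h"
  shows "quad_form V E h \<le> c * norm2 V h"
proof (cases "norm2 V h = 0")
  case True
  then show ?thesis using quad_form_norm2_zero[OF fin h] by simp
next
  case False
  have "norm2 V h \<ge> 0" unfolding norm2_def by (simp add: sum_nonneg)
  with False have np: "norm2 V h > 0" by simp
  define h' where "h' = (\<lambda>x. (1 / sqrt (norm2 V h)) * h x)"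
  have "supported V h'" using h by (simp add: h'_def supported_def)
  moreover have "norm2 V h' = 1" unfolding h'_def norm2_scale using np by (simp add: power_divide)
  ultimately have "quad_form V E h' \<le> c" using sphere by blast
  moreover have "quad_form V E h' = quad_form V E h / norm2 V h"
    unfolding h'_def quad_form_scale using np by (simp add: power_divide)
  ultimately show ?thesis using np by (simp add: divide_le_eq)
qed

text \<open>Rayleigh principle, existence half: a maximiser of the quadratic form on the unit sphere
  is an eigenvector, so the maximum is an eigenvalue bounding the quadratic form.\<close>
lemma rayleigh_max_eigenvalue:
  assumes sg: "simple_graph V E" and ne: "V \<noteq> {}"
  obtains m where "m \<in> lap_eigenvalues V E"
    and "\<forall>h. supported V h \<longrightarrow> quad_form V E h \<le> 2 * m * norm2 V h"
proof -
  have fin: "finite V" using sg simple_graph_def by auto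
  obtain g where g: "supported V g" "norm2 V g = 1"
    "\<forall>h. supported V h \<and> norm2 V h = 1 \<longrightarrow> quad_form V E h \<le> quad_form V E g"
    using quad_form_attains_max[OF fin ne] by blast
  define m where "m = quad_form V E g / 2"
  have bnd: "\<forall>h. supported V h \<longrightarrow> quad_form V E h \<le> 2 * m * norm2 V h"
    using quad_form_bound_from_sphere[OF fin g(3)] by (simp add: m_def)
  have "quad_form V E g = 2 * m * norm2 V g" using g(2) by (simp add: m_def)
  then have "\<forall>x\<in>V. laplacian V E g x = m * g x"
    using extremal_is_eigen[OF sg g(1) bnd] by blast
  moreover have "\<exists>x\<in>V. g x \<noteq> 0"
  proof (rule ccontr)
    assume "\<not> (\<exists>x\<in>V. g x \<noteq> 0)"
    then have "norm2 V g = 0" by (simp add: norm2_def)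
    with g(2) show False by simp
  qed
  ultimately have "lap_eigenvector V E m g"
    using g(1) unfolding lap_eigenvector_def supported_def by blast
  then have "m \<in> lap_eigenvalues V E" unfolding lap_eigenvalues_def by blast
  then show thesis using bnd by (rule that)
qed

lemma eigenvalue_le_bound:
  assumes sg: "simple_graph V E" and mu: "\<mu> \<in> lap_eigenvalues V E"
    and bnd: "\<forall>h. supported V h \<longrightarrow> quad_form V E h \<le> 2 * m * norm2 V h"
  shows "\<mu> \<le> m"
proof -
  have fin: "finite V" using sg simple_graph_def by auto
  obtain f where f: "lap_eigenvector V E \<mu> f" using mu unfolding lap_eigenvalues_def by blast
  have "\<forall>x\<in>V. laplacian V E f x = \<mu> * f x" using f unfolding lap_eigenvector_def by blast
  then have eq: "quad_form V E f = 2 * \<mu> * norm2 V f" by (rule eigen_quad_form[OF sg])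
  have "supported V f" using f unfolding lap_eigenvector_def supported_def by blast
  then have "quad_form V E f \<le> 2 * m * norm2 V f" using bnd by blast
  with eq have "\<mu> * norm2 V f \<le> m * norm2 V f" by simp
  then show ?thesis using eigenvector_norm2_pos[OF fin f] by simp
qed

lemma lap_max_eig_bound:
  assumes sg: "simple_graph V E" and ne: "V \<noteq> {}"
  shows "\<forall>h. supported V h \<longrightarrow> quad_form V E h \<le> 2 * lap_max_eig V E * norm2 V h"
proof -
  obtain m where m: "m \<in> lap_eigenvalues V E"
    "\<forall>h. supported V h \<longrightarrow> quad_form V E h \<le> 2 * m * norm2 V h"
    using rayleigh_max_eigenvalue[OF sg ne] by blast
  have "lap_max_eig V E = m"
    unfolding lap_max_eig_def using finite_lap_eigenvalues[OF sg] m eigenvalue_le_bound[OF sg _ m(2)]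
    by (intro Max_eqI) auto
  with m(2) show ?thesis by simp
qed

lemma quad_form_bound_mono:
  assumes bnd: "\<forall>h. supported V h \<longrightarrow> quad_form V E h \<le> 2 * \<mu> * norm2 V h" and le: "\<mu> \<le> \<mu>'"
  shows "\<forall>h. supported V h \<longrightarrow> quad_form V E h \<le> 2 * \<mu>' * norm2 V h"
proof (intro allI impI)
  fix h assume h: "supported V h"
  have "norm2 V h \<ge> 0" unfolding norm2_def by (simp add: sum_nonneg)
  then have "2 * \<mu> * norm2 V h \<le> 2 * \<mu>' * norm2 V h" using le by (simp add: mult_right_mono)
  then show "quad_form V E h \<le> 2 * \<mu>' * norm2 V h" using bnd h by fastforce
qed

lemma sum_star_arcs:
  assumes fin: "finite X" and a: "a \<notin> X"
  shows "(\<Sum>p\<in>(\<lambda>x. (a, x)) ` X \<union> (\<lambda>x. (x, a)) ` X. \<phi> p) = (\<Sum>x\<in>X. \<phi> (a, x) + \<phi> (x, a))"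
proof -
  have "(\<lambda>x. (a, x)) ` X \<inter> (\<lambda>x. (x, a)) ` X = {}" using a by auto
  then have "(\<Sum>p\<in>(\<lambda>x. (a, x)) ` X \<union> (\<lambda>x. (x, a)) ` X. \<phi> p)
      = (\<Sum>p\<in>(\<lambda>x. (a, x)) ` X. \<phi> p) + (\<Sum>p\<in>(\<lambda>x. (x, a)) ` X. \<phi> p)"
    by (intro sum.union_disjoint) (simp_all add: fin)
  also have "\<dots> = (\<Sum>x\<in>X. \<phi> (a, x)) + (\<Sum>x\<in>X. \<phi> (x, a))"
    by (simp add: sum.reindex inj_on_def)
  finally show ?thesis by (simp add: sum.distrib)
qed

section \<open>Paths and branches in trees\<close>

lemma path_single: "is_path E [x]"
  by (simp add: is_path_def)

lemma path_snoc:
  assumes p: "is_path E ps" and z: "z \<notin> set ps" and adj: "adj E (last ps) z"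
  shows "is_path E (ps @ [z])"
  unfolding is_path_def
proof (intro conjI allI impI)
  show "ps @ [z] \<noteq> []" by simp
  show "distinct (ps @ [z])" using p z by (simp add: is_path_def)
  fix i assume i: "Suc i < length (ps @ [z])"
  have ne: "ps \<noteq> []" using p by (simp add: is_path_def)
  show "adj E ((ps @ [z]) ! i) ((ps @ [z]) ! Suc i)"
  proof (cases "Suc i < length ps")
    case True
    then show ?thesis using p by (simp add: is_path_def nth_append)
  next
    case False
    then have ii: "i = length ps - 1" "Suc i = length ps" using i by auto
    then have "(ps @ [z]) ! i = last ps" using ne by (simp add: nth_append last_conv_nth)
    moreover have "(ps @ [z]) ! Suc i = z" using ii by (simp add: nth_append)
    ultimately show ?thesis using adj by simp
  qed
qed

lemma path_cons:
  assumes p: "is_path E ps" and z: "z \<notin> set ps" and adj: "adj E z (hd ps)"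
  shows "is_path E (z # ps)"
  unfolding is_path_def
proof (intro conjI allI impI)
  show "z # ps \<noteq> []" by simp
  show "distinct (z # ps)" using p z by (simp add: is_path_def)
  fix i assume i: "Suc i < length (z # ps)"
  have ne: "ps \<noteq> []" using p by (simp add: is_path_def)
  show "adj E ((z # ps) ! i) ((z # ps) ! Suc i)"
  proof (cases i)
    case 0
    then show ?thesis using adj ne by (simp add: hd_conv_nth)
  next
    case (Suc j)
    then show ?thesis using p i by (simp add: is_path_def)
  qed
qed

lemma path_take:
  assumes p: "is_path E ps" and i: "i < length ps"
  shows "is_path E (take (Suc i) ps)"
  using p i unfolding is_path_def by (auto simp: distinct_take)

lemma last_take_nth: "i < length ps \<Longrightarrow> last (take (Suc i) ps) = ps ! i"
  by (simp add: take_Suc_conv_app_nth)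

lemma hd_take_Suc: "ps \<noteq> [] \<Longrightarrow> hd (take (Suc i) ps) = hd ps"
  by (cases ps) auto

text \<open>The branch of the tree behind the edge ab: the vertices reachable from b by a path
  avoiding a, i.e. the component of T - ab containing b.\<close>
definition branch :: "'a set set \<Rightarrow> 'a \<Rightarrow> 'a \<Rightarrow> 'a set" where
  "branch E a b = {y. \<exists>ps. is_path E ps \<and> hd ps = b \<and> last ps = y \<and> a \<notin> set ps}"

lemma branch_self: "a \<noteq> b \<Longrightarrow> b \<in> branch E a b"
  unfolding branch_def by (rule CollectI, rule exI[of _ "[b]"]) (simp add: path_single)

lemma branch_notin: "a \<notin> branch E a b"
proof
  assume "a \<in> branch E a b"
  then obtain ps where "is_path E ps" "last ps = a" "a \<notin> set ps" unfolding branch_def by blast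
  then show False using last_in_set[of ps] by (auto simp: is_path_def)
qed

lemma branch_exit:
  assumes ac: "acyclic_graph E" and ab: "{a,b} \<in> E" and y: "y \<in> branch E a b"
    and yz: "{y,z} \<in> E" and z: "z \<notin> branch E a b"
  shows "y = b \<and> z = a"
proof -
  obtain ps where ps: "is_path E ps" "hd ps = b" "last ps = y" "a \<notin> set ps"
    using y unfolding branch_def by blast
  have ne: "ps \<noteq> []" using ps(1) by (simp add: is_path_def)
  have za: "z = a"
  proof (rule ccontr)
    assume za: "z \<noteq> a"
    show False
    proof (cases "z \<in> set ps")
      case True
      then obtain i where i: "i < length ps" "ps ! i = z" by (auto simp: in_set_conv_nth)
      have "is_path E (take (Suc i) ps)" by (rule path_take[OF ps(1) i(1)])
      moreover have "hd (take (Suc i) ps) = b" using ps(2) ne by (simp add: hd_take_Suc)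
      moreover have "last (take (Suc i) ps) = z" using i by (simp add: last_take_nth)
      moreover have "a \<notin> set (take (Suc i) ps)" using ps(4) by (meson in_set_takeD)
      ultimately have "z \<in> branch E a b" unfolding branch_def by blast
      with z show False by simp
    next
      case False
      have "is_path E (ps @ [z])" using path_snoc[OF ps(1) False] ps(3) yz by (simp add: adj_def)
      moreover have "hd (ps @ [z]) = b" using ps(2) ne by simp
      moreover have "last (ps @ [z]) = z" by simp
      moreover have "a \<notin> set (ps @ [z])" using ps(4) za by simp
      ultimately have "z \<in> branch E a b" unfolding branch_def by blast
      with z show False by simp
    qed
  qed
  have yb: "y = b"
  proof (rule ccontr)
    assume yb: "y \<noteq> b"
    have qs: "is_path E (ps @ [a])" using path_snoc[OF ps(1) ps(4)] ps(3) yz za by (simp add: adj_def)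
    have "length ps \<noteq> 1"
    proof
      assume "length ps = 1"
      then obtain x where "ps = [x]" by (cases ps) auto
      then show False using ps(2,3) yb by simp
    qed
    then have "length ps \<ge> 2" using ne by (cases ps) (auto simp: Suc_le_eq)
    then have "length (ps @ [a]) \<ge> 3" by simp
    moreover have "adj E (last (ps @ [a])) (hd (ps @ [a]))" using ab ps(2) ne by (simp add: adj_def)
    ultimately show False using ac qs unfolding acyclic_graph_def by blast
  qed
  show ?thesis using za yb by simp
qed

lemma branch_path_stays:
  assumes ac: "acyclic_graph E" and ab: "{a,b} \<in> E" and q: "is_path E qs"
    and l: "last qs \<in> branch E a b" and a: "a \<notin> set qs"
  shows "hd qs \<in> branch E a b"
proof -
  have ne: "qs \<noteq> []" using q by (simp add: is_path_def)
  have "\<forall>n. n < length qs \<longrightarrow> qs ! (length qs - 1 - n) \<in> branch E a b"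
  proof
    fix n show "n < length qs \<longrightarrow> qs ! (length qs - 1 - n) \<in> branch E a b"
    proof (induction n)
      case 0
      then show ?case using l ne by (simp add: last_conv_nth)
    next
      case (Suc n)
      show ?case
      proof
        assume n: "Suc n < length qs"
        define j where "j = length qs - 2 - n"
        have j1: "Suc j = length qs - 1 - n" "j = length qs - 1 - Suc n" using n by (auto simp: j_def)
        have yC: "qs ! Suc j \<in> branch E a b" using Suc n j1 by simp
        have "adj E (qs ! j) (qs ! Suc j)" using q n unfolding is_path_def j_def by auto
        then have e: "{qs ! Suc j, qs ! j} \<in> E" by (simp add: adj_def insert_commute)
        show "qs ! (length qs - 1 - Suc n) \<in> branch E a b"
        proof (rule ccontr)
          assume "qs ! (length qs - 1 - Suc n) \<notin> branch E a b"
          then have "qs ! j \<notin> branch E a b" using j1 by simp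
          then have "qs ! j = a" using branch_exit[OF ac ab yC e] by simp
          moreover have "qs ! j \<in> set qs" using n by (simp add: j_def)
          ultimately show False using a by simp
        qed
      qed
    qed
  qed
  then have "qs ! 0 \<in> branch E a b" using ne by (metis diff_less diff_self_eq_0 length_greater_0_conv less_one zero_less_diff)
  then show ?thesis using ne by (simp add: hd_conv_nth)
qed


section \<open>Eigenvectors for the maximum eigenvalue of a tree do not vanish\<close>
lemma finite_nbrs: "finite V \<Longrightarrow> finite (nbrs V E x)"
  by (simp add: nbrs_def)

text \<open>Negating a vector on the branch behind the edge ab leaves the quadratic form unchanged
  when the vector vanishes at a, since ab is the only edge leaving the branch.\<close>
definition negate_on :: "'a set \<Rightarrow> ('a \<Rightarrow> real) \<Rightarrow> 'a \<Rightarrow> real" where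
  "negate_on C f y = (if y \<in> C then - f y else f y)"

lemma quad_form_negate_branch:
  assumes ac: "acyclic_graph E" and ab: "{a, b} \<in> E" and fa: "f a = 0"
  shows "quad_form V E (negate_on (branch E a b) f) = quad_form V E f"
  unfolding quad_form_def
proof (rule sum.cong[OF refl])
  let ?C = "branch E a b" and ?g = "negate_on (branch E a b) f"
  fix p assume p: "p \<in> arcs V E"
  obtain y z where yz: "p = (y, z)" by (cases p)
  have e: "{y, z} \<in> E" using p yz by (simp add: arcs_def adj_def)
  have e': "{z, y} \<in> E" using e by (simp add: insert_commute)
  have "(?g y - ?g z)^2 = (f y - f z)^2"
  proof (cases "y \<in> ?C"; cases "z \<in> ?C")
    assume "y \<in> ?C" "z \<notin> ?C"
    then have "y = b \<and> z = a" using branch_exit[OF ac ab _ e] by simp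
    then show ?thesis using \<open>y \<in> ?C\<close> \<open>z \<notin> ?C\<close> fa by (simp add: negate_on_def power2_eq_square)
  next
    assume "y \<notin> ?C" "z \<in> ?C"
    then have "z = b \<and> y = a" using branch_exit[OF ac ab _ e'] by simp
    then show ?thesis using \<open>y \<notin> ?C\<close> \<open>z \<in> ?C\<close> fa by (simp add: negate_on_def power2_eq_square)
  qed (auto simp: negate_on_def power2_eq_square algebra_simps)
  then show "(?g (fst p) - ?g (snd p))^2 = (f (fst p) - f (snd p))^2" using yz by simp
qed

text \<open>A zero of a top eigenvector propagates to the neighbours: negating f behind the edge ab
  gives another vector attaining the Rayleigh bound, hence an eigenvector, and comparing its
  eigen-equation at a with that of f isolates 2 f(b) = 0.\<close>
lemma eigen_zero_spreads:
  assumes tr: "is_tree V E"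
    and bnd: "\<forall>h. supported V h \<longrightarrow> quad_form V E h \<le> 2 * \<mu> * norm2 V h"
    and fe: "lap_eigenvector V E \<mu> f" and fa: "f a = 0" and ab: "{a, b} \<in> E"
  shows "f b = 0"
proof -
  have sg: "simple_graph V E" and ac: "acyclic_graph E" using tr by (auto simp: is_tree_def)
  have fin: "finite V" using sg simple_graph_def by auto
  have abV: "a \<in> V" "b \<in> V" "a \<noteq> b" using simple_graph_edge[OF sg ab] by auto
  define C where "C = branch E a b"
  define g where "g = negate_on C f"
  have bC: "b \<in> C" using abV by (simp add: C_def branch_self)
  have aC: "a \<notin> C" by (simp add: C_def branch_notin)
  have fl: "\<forall>x\<in>V. laplacian V E f x = \<mu> * f x" using fe unfolding lap_eigenvector_def by blast
  have gs: "supported V g"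
    using fe unfolding lap_eigenvector_def supported_def g_def negate_on_def by simp
  have "norm2 V g = norm2 V f" unfolding norm2_def by (rule sum.cong) (auto simp: g_def negate_on_def)
  moreover have "quad_form V E g = quad_form V E f"
    unfolding g_def C_def using ac ab fa by (rule quad_form_negate_branch)
  ultimately have "quad_form V E g = 2 * \<mu> * norm2 V g" using eigen_quad_form[OF sg fl] by simp
  then have "laplacian V E g a = \<mu> * g a" using extremal_is_eigen[OF sg gs bnd _ abV(1)] by blast
  then have lg: "(\<Sum>z\<in>nbrs V E a. g a - g z) = 0"
    using fa aC by (simp add: laplacian_nbrs[OF sg] g_def negate_on_def)
  have "laplacian V E f a = 0" using fl abV(1) fa by simp
  then have lf: "(\<Sum>z\<in>nbrs V E a. f a - f z) = 0" by (simp only: laplacian_nbrs[OF sg])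
  have "(\<Sum>z\<in>nbrs V E a. g a - g z) = (\<Sum>z\<in>nbrs V E a. (f a - f z) + (if z = b then 2 * f b else 0))"
  proof (rule sum.cong[OF refl])
    fix z assume z: "z \<in> nbrs V E a"
    have "z \<notin> C" if "z \<noteq> b"
    proof
      assume zC: "z \<in> C"
      have "{z, a} \<in> E" using z by (simp add: nbrs_def adj_def insert_commute)
      then show False using branch_exit[OF ac ab zC[unfolded C_def]] aC that by (simp add: C_def)
    qed
    then show "g a - g z = (f a - f z) + (if z = b then 2 * f b else 0)"
      using aC bC by (cases "z = b") (simp_all add: g_def negate_on_def)
  qed
  also have "\<dots> = (\<Sum>z\<in>nbrs V E a. f a - f z) + 2 * f b"
    using abV ab finite_nbrs[OF fin] by (simp add: sum.distrib nbrs_def adj_def)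
  finally show ?thesis using lg lf by simp
qed

text \<open>Consequently, by connectivity, an eigenvector attaining the Rayleigh bound on a tree
  has no zero entry.\<close>
lemma max_eigenvector_nonzero:
  assumes tr: "is_tree V E"
    and bnd: "\<forall>h. supported V h \<longrightarrow> quad_form V E h \<le> 2 * \<mu> * norm2 V h"
    and fe: "lap_eigenvector V E \<mu> f" and aV: "a \<in> V"
  shows "f a \<noteq> 0"
proof
  assume fa: "f a = 0"
  have con: "connected_graph V E" using tr by (simp add: is_tree_def)
  have "f y = 0" if yV: "y \<in> V" for y
  proof -
    obtain ps where ps: "is_path E ps" "hd ps = a" "last ps = y" using con aV yV unfolding connected_graph_def by blast
    have ne: "ps \<noteq> []" using ps(1) by (simp add: is_path_def)
    have "\<forall>i. i < length ps \<longrightarrow> f (ps ! i) = 0"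
    proof
      fix i show "i < length ps \<longrightarrow> f (ps ! i) = 0"
      proof (induction i)
        case 0 then show ?case using ps(2) fa ne by (simp add: hd_conv_nth)
      next
        case (Suc i)
        show ?case
        proof
          assume i: "Suc i < length ps"
          then have "adj E (ps ! i) (ps ! Suc i)" using ps(1) by (simp add: is_path_def)
          then have "{ps ! i, ps ! Suc i} \<in> E" by (simp add: adj_def)
          moreover have "f (ps ! i) = 0" using Suc i by simp
          ultimately show "f (ps ! Suc i) = 0" using eigen_zero_spreads[OF tr bnd fe] by blast
        qed
      qed
    qed
    moreover have "length ps - 1 < length ps" using ne by simp
    ultimately have "f (ps ! (length ps - 1)) = 0" by blast
    then show ?thesis using ps(3) ne by (simp add: last_conv_nth)
  qed
  then show False using fe unfolding lap_eigenvector_def by blast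
qed


section \<open>Moving a bundle of edges from u to v\<close>

text \<open>The scalar inequality behind the comparison of quadratic forms: if |f u| <= |f v| and
  the sign s is chosen with s f(v) c <= 0, then (f u - c)^2 <= (f v - s c)^2.\<close>
lemma flip_sign_ineq:
  fixes fu fv c s :: real
  assumes "s * s = 1" "s * fv * c \<le> 0" "\<bar>fu\<bar> \<le> \<bar>fv\<bar>"
  shows "(fu - c)^2 \<le> (fv - s * c)^2"
proof -
  have "fu^2 \<le> fv^2" using assms(3) by (simp add: abs_le_square_iff)
  moreover have "\<bar>fu\<bar> * \<bar>c\<bar> \<le> \<bar>fv\<bar> * \<bar>c\<bar>" using assms(3) by (simp add: mult_right_mono)
  moreover have "- (fu * c) \<le> \<bar>fu\<bar> * \<bar>c\<bar>"
  proof -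
    have "- (fu * c) \<le> \<bar>fu * c\<bar>" by (rule abs_ge_minus_self)
    then show ?thesis by (simp only: abs_mult)
  qed
  moreover have "\<bar>fv\<bar> * \<bar>c\<bar> = - (s * fv * c)"
  proof -
    have "s = 1 \<or> s = -1" using assms(1) by (simp add: square_eq_1_iff)
    then have "\<bar>s\<bar> = 1" by auto
    then have "\<bar>s * fv * c\<bar> = \<bar>fv\<bar> * \<bar>c\<bar>" by (simp add: abs_mult)
    then show ?thesis using assms(2) by simp
  qed
  moreover have "(fu - c)^2 = fu^2 - 2 * (fu * c) + c^2" by (simp add: power2_eq_square algebra_simps)
  moreover have "(fv - s * c)^2 = fv^2 - 2 * (s * fv * c) + (s * s) * c^2" by (simp add: power2_eq_square algebra_simps)
  ultimately show ?thesis using assms(1) by simp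
qed

definition move_edges :: "'a set set \<Rightarrow> 'a \<Rightarrow> 'a \<Rightarrow> 'a set \<Rightarrow> 'a set set" where
  "move_edges E u v X = (E - (\<lambda>x. {u, x}) ` X) \<union> (\<lambda>x. {v, x}) ` X"

lemma move_edges_iff:
  "{y, z} \<in> move_edges E u v X \<longleftrightarrow>
     ({y, z} \<in> E \<and> \<not> (\<exists>x\<in>X. {y, z} = {u, x})) \<or> (\<exists>x\<in>X. {y, z} = {v, x})"
  by (auto simp: move_edges_def)

text \<open>The setting of the theorem: f is an eigenvector of the tree (V,E) for an eigenvalue lam
  that bounds the Rayleigh quotient (i.e. lam is the largest eigenvalue), and the edges ux,
  x in X, are to be moved to v; none of the x lies on the path from u to v.\<close>
locale edge_move =
  fixes V :: "'a set" and E :: "'a set set" and u v :: 'a and X :: "'a set"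
    and f :: "'a \<Rightarrow> real" and lam :: real
  assumes tree: "is_tree V E"
    and uV: "u \<in> V" and vV: "v \<in> V" and uv: "u \<noteq> v"
    and X_edges: "\<forall>x\<in>X. {u, x} \<in> E"
    and X_off: "\<forall>x\<in>X. \<not> on_path E u v x"
    and eig: "lap_eigenvector V E lam f"
    and bound: "\<forall>h. supported V h \<longrightarrow> quad_form V E h \<le> 2 * lam * norm2 V h"
begin

abbreviation E_moved :: "'a set set" where
  "E_moved \<equiv> move_edges E u v X"

lemma simple: "simple_graph V E" and acyclic: "acyclic_graph E" and finite_V: "finite V"
  using tree by (auto simp: is_tree_def simple_graph_def)

lemma f_eigen: "\<forall>x\<in>V. laplacian V E f x = lam * f x"
  using eig unfolding lap_eigenvector_def by blast

lemma f_supported: "supported V f"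
  using eig unfolding lap_eigenvector_def supported_def by blast

lemma X_vertex: "x \<in> X \<Longrightarrow> x \<in> V \<and> x \<noteq> u"
  using simple_graph_edge[OF simple] X_edges by blast

lemma finite_X: "finite X"
  using X_vertex finite_V by (meson finite_subset subsetI)

text \<open>If x were v, the edge ux itself would be the path from u to v.\<close>
lemma X_not_v: "x \<in> X \<Longrightarrow> x \<noteq> v"
proof
  assume x: "x \<in> X" "x = v"
  have "is_path E [u, x]"
    using path_cons[OF path_single[of E x]] X_vertex[OF x(1)] X_edges x(1) by (auto simp: adj_def)
  then have "on_path E u v x" unfolding on_path_def using x(2) by (intro exI[of _ "[u, x]"]) simp
  with X_off x(1) show False by blast
qed

text \<open>If xv were an edge, u x v would be the path from u to v.\<close>
lemma X_not_adj_v: "x \<in> X \<Longrightarrow> {v, x} \<notin> E"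
proof
  assume x: "x \<in> X" and e: "{v, x} \<in> E"
  have "is_path E [x, v]"
    using path_cons[OF path_single[of E v]] X_not_v[OF x] e by (simp add: adj_def insert_commute)
  then have "is_path E [u, x, v]"
    using path_cons[of E "[x, v]" u] X_vertex[OF x] uv X_edges x by (auto simp: adj_def)
  then have "on_path E u v x" unfolding on_path_def by (intro exI[of _ "[u, x, v]"]) simp
  with X_off x show False by blast
qed

lemma u_notin_X: "u \<notin> X" and v_notin_X: "v \<notin> X"
  using X_vertex X_not_v by blast+

lemma in_own_branch: "x \<in> X \<Longrightarrow> x \<in> branch E u x"
  using X_vertex[of x] branch_self[of u x E] by auto

lemma branch_leave:
  "x \<in> X \<Longrightarrow> y \<in> branch E u x \<Longrightarrow> {y, z} \<in> E \<Longrightarrow> z \<notin> branch E u x \<Longrightarrow> y = x \<and> z = u"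
  using branch_exit[OF acyclic] X_edges by blast

text \<open>A path from x to v avoiding u would extend to a path from u to v through x.\<close>
lemma v_not_in_branch: "x \<in> X \<Longrightarrow> v \<notin> branch E u x"
proof
  assume x: "x \<in> X" and "v \<in> branch E u x"
  then obtain ps where ps: "is_path E ps" "hd ps = x" "last ps = v" "u \<notin> set ps"
    unfolding branch_def by blast
  have ne: "ps \<noteq> []" using ps(1) by (simp add: is_path_def)
  have "is_path E (u # ps)" using path_cons[OF ps(1) ps(4)] ps(2) X_edges x by (simp add: adj_def)
  moreover have "x \<in> set (u # ps)" using ps(2) ne by auto
  ultimately have "on_path E u v x"
    using ps(3) ne unfolding on_path_def by (intro exI[of _ "u # ps"]) simp
  with X_off x show False by blast
qed

lemma branches_disjoint:
  assumes x1: "x1 \<in> X" and x2: "x2 \<in> X" and y1: "y \<in> branch E u x1" and y2: "y \<in> branch E u x2"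
  shows "x1 = x2"
proof -
  obtain ps where ps: "is_path E ps" "hd ps = x2" "last ps = y" "u \<notin> set ps"
    using y2 unfolding branch_def by blast
  have "x2 \<in> branch E u x1"
    using branch_path_stays[OF acyclic _ ps(1) _ ps(4)] X_edges x1 ps(2,3) y1 by simp
  moreover have "{x2, u} \<in> E" by (subst insert_commute) (use X_edges x2 in blast)
  ultimately show "x1 = x2" using branch_leave[OF x1 _ _ branch_notin] by blast
qed

definition flip_sign :: "'a \<Rightarrow> real" where
  "flip_sign x = (if f v * f x > 0 then -1 else 1)"

lemma flip_sign_sq: "flip_sign x * flip_sign x = 1"
  by (simp add: flip_sign_def)

lemma flip_sign_neg:
  assumes x: "x \<in> X"
  shows "flip_sign x * f v * f x < 0"
proof -
  have "f v \<noteq> 0" "f x \<noteq> 0"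
    using max_eigenvector_nonzero[OF tree bound eig] vV X_vertex[OF x] by auto
  then have "f v * f x \<noteq> 0" by simp
  then have "f v * f x > 0 \<or> f v * f x < 0" by (meson linorder_neqE_linordered_idom)
  then show ?thesis by (auto simp: flip_sign_def)
qed

definition branch_sign :: "'a \<Rightarrow> real" where
  "branch_sign y = (if \<exists>x\<in>X. y \<in> branch E u x
     then flip_sign (SOME x. x \<in> X \<and> y \<in> branch E u x) else 1)"

lemma branch_sign_in:
  assumes x: "x \<in> X" and y: "y \<in> branch E u x"
  shows "branch_sign y = flip_sign x"
proof -
  have "(SOME x'. x' \<in> X \<and> y \<in> branch E u x') = x"
    by (rule some_equality) (use x y branches_disjoint in auto)
  then show ?thesis using x y by (auto simp: branch_sign_def)
qed

lemma branch_sign_out: "\<forall>x\<in>X. y \<notin> branch E u x \<Longrightarrow> branch_sign y = 1"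
  by (simp add: branch_sign_def)

lemma branch_sign_sq: "(branch_sign y)^2 = 1"
  by (simp add: branch_sign_def flip_sign_sq power2_eq_square)

lemma branch_sign_edge:
  assumes e: "{y, z} \<in> E" and not_moved: "\<forall>x\<in>X. {y, z} \<noteq> {u, x}"
  shows "branch_sign y = branch_sign z"
proof (cases "\<exists>x\<in>X. y \<in> branch E u x \<or> z \<in> branch E u x")
  case True
  then obtain x where x: "x \<in> X" and yz: "y \<in> branch E u x \<or> z \<in> branch E u x" by blast
  have e': "{z, y} \<in> E" using e by (simp add: insert_commute)
  have "y \<in> branch E u x \<and> z \<in> branch E u x"
  proof (rule ccontr)
    assume "\<not> (y \<in> branch E u x \<and> z \<in> branch E u x)"
    then have "(y = x \<and> z = u) \<or> (z = x \<and> y = u)"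
      using yz branch_leave[OF x _ e] branch_leave[OF x _ e'] by blast
    with not_moved x show False by (auto simp: insert_commute)
  qed
  then show ?thesis using branch_sign_in[OF x] by simp
next
  case False
  then show ?thesis using branch_sign_out by simp
qed

definition f_tilde :: "'a \<Rightarrow> real" where
  "f_tilde y = branch_sign y * f y"

lemma f_tilde_supported: "supported V f_tilde"
  using f_supported by (simp add: supported_def f_tilde_def)

lemma norm2_f_tilde: "norm2 V f_tilde = norm2 V f"
  unfolding norm2_def f_tilde_def
  by (rule sum.cong[OF refl]) (simp add: power_mult_distrib branch_sign_sq)

lemma f_tilde_in: "x \<in> X \<Longrightarrow> y \<in> branch E u x \<Longrightarrow> f_tilde y = flip_sign x * f y"
  by (simp add: f_tilde_def branch_sign_in)

lemma f_tilde_out: "\<forall>x\<in>X. y \<notin> branch E u x \<Longrightarrow> f_tilde y = f y"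
  by (simp add: f_tilde_def branch_sign_out)

lemma f_tilde_X: "x \<in> X \<Longrightarrow> f_tilde x = flip_sign x * f x"
  using f_tilde_in in_own_branch by blast

lemma f_tilde_u: "f_tilde u = f u"
  by (rule f_tilde_out) (simp add: branch_notin)

lemma f_tilde_v: "f_tilde v = f v"
  using f_tilde_out v_not_in_branch by blast

definition old_arcs :: "('a \<times> 'a) set" where
  "old_arcs = (\<lambda>x. (u, x)) ` X \<union> (\<lambda>x. (x, u)) ` X"

definition new_arcs :: "('a \<times> 'a) set" where
  "new_arcs = (\<lambda>x. (v, x)) ` X \<union> (\<lambda>x. (x, v)) ` X"

lemma simple_moved: "simple_graph V E_moved"
  unfolding simple_graph_def
proof (intro conjI ballI)
  show "finite V" by (rule finite_V)
  fix e assume "e \<in> E_moved"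
  then consider "e \<in> E" | x where "x \<in> X" "e = {v, x}" by (auto simp: move_edges_def)
  then show "\<exists>x y. x \<noteq> y \<and> x \<in> V \<and> y \<in> V \<and> e = {x, y}"
  proof cases
    case 1 then show ?thesis using simple unfolding simple_graph_def by blast
  next
    case 2 then show ?thesis using X_not_v X_vertex vV by blast
  qed
qed

lemma arcs_moved: "arcs V E_moved = (arcs V E - old_arcs) \<union> new_arcs"
proof (rule set_eqI)
  fix p :: "'a \<times> 'a"
  obtain y z where p: "p = (y, z)" by (cases p)
  have "(y, z) \<in> old_arcs \<longleftrightarrow> (\<exists>x\<in>X. {y, z} = {u, x})"
    by (auto simp: old_arcs_def doubleton_eq_iff)
  moreover have "(y, z) \<in> new_arcs \<longleftrightarrow> (\<exists>x\<in>X. {y, z} = {v, x})"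
    by (auto simp: new_arcs_def doubleton_eq_iff)
  moreover have "(y, z) \<in> new_arcs \<Longrightarrow> y \<in> V \<and> z \<in> V"
    using X_vertex vV by (auto simp: new_arcs_def)
  ultimately show "p \<in> arcs V E_moved \<longleftrightarrow> p \<in> (arcs V E - old_arcs) \<union> new_arcs"
    unfolding p arcs_def adj_def using move_edges_iff[of y z E u v X] by auto
qed

text \<open>Moving the edges to v and flipping the branches does not decrease the quadratic form:
  away from the moved edges nothing changes, and each term (f u - f x)^2 is replaced by the
  larger term (f v - flip_sign x * f x)^2.\<close>
lemma quad_form_moved_ge:
  assumes fuv: "\<bar>f u\<bar> \<le> \<bar>f v\<bar>"
  shows "quad_form V E f \<le> quad_form V E_moved f_tilde"
proof -
  define \<phi> where "\<phi> p = (f (fst p) - f (snd p))^2" for p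
  define \<psi> where "\<psi> p = (f_tilde (fst p) - f_tilde (snd p))^2" for p
  have finP: "finite (arcs V E)" by (rule finite_arcs[OF finite_V])
  have old_sub: "old_arcs \<subseteq> arcs V E"
    using X_edges X_vertex uV by (auto simp: old_arcs_def arcs_def adj_def insert_commute)
  have new_disj: "new_arcs \<inter> arcs V E = {}"
    using X_not_adj_v by (auto simp: new_arcs_def arcs_def adj_def insert_commute)
  have fin_new: "finite new_arcs" using finite_X by (simp add: new_arcs_def)
  have old: "(\<Sum>p\<in>old_arcs. \<phi> p) = (\<Sum>x\<in>X. 2 * (f u - f x)^2)"
    unfolding old_arcs_def
    by (subst sum_star_arcs[OF finite_X u_notin_X]) (auto simp: \<phi>_def power2_commute intro: sum.cong)
  have new: "(\<Sum>p\<in>new_arcs. \<psi> p) = (\<Sum>x\<in>X. 2 * (f v - flip_sign x * f x)^2)"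
    unfolding new_arcs_def
    by (subst sum_star_arcs[OF finite_X v_notin_X])
       (auto simp: \<psi>_def f_tilde_v f_tilde_X power2_commute intro: sum.cong)
  have "(\<Sum>x\<in>X. 2 * (f u - f x)^2) \<le> (\<Sum>x\<in>X. 2 * (f v - flip_sign x * f x)^2)"
    using flip_sign_ineq[OF flip_sign_sq _ fuv] flip_sign_neg
    by (intro sum_mono) (simp add: less_imp_le)
  moreover have "(\<Sum>p\<in>arcs V E - old_arcs. \<psi> p) = (\<Sum>p\<in>arcs V E - old_arcs. \<phi> p)"
  proof (rule sum.cong[OF refl])
    fix p assume p: "p \<in> arcs V E - old_arcs"
    then have "{fst p, snd p} \<in> E" "\<forall>x\<in>X. {fst p, snd p} \<noteq> {u, x}"
      by (auto simp: arcs_def adj_def old_arcs_def doubleton_eq_iff)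
    then have "branch_sign (fst p) = branch_sign (snd p)" by (rule branch_sign_edge)
    then have "\<psi> p = (branch_sign (fst p))^2 * \<phi> p"
      by (simp add: \<psi>_def \<phi>_def f_tilde_def power2_eq_square algebra_simps)
    then show "\<psi> p = \<phi> p" by (simp add: branch_sign_sq)
  qed
  moreover have "quad_form V E_moved f_tilde = (\<Sum>p\<in>arcs V E - old_arcs. \<psi> p) + (\<Sum>p\<in>new_arcs. \<psi> p)"
    unfolding quad_form_def arcs_moved \<psi>_def[symmetric]
    by (rule sum.union_disjoint) (use finP fin_new new_disj in auto)
  moreover have "quad_form V E f = (\<Sum>p\<in>arcs V E - old_arcs. \<phi> p) + (\<Sum>p\<in>old_arcs. \<phi> p)"
    unfolding quad_form_def \<phi>_def[symmetric] using sum.subset_diff[OF old_sub finP] by simp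
  ultimately show ?thesis using old new by linarith
qed

lemma nbrs_moved_u: "nbrs V E_moved u = nbrs V E u - X"
proof (rule set_eqI)
  fix y
  have "(\<exists>x\<in>X. {u, y} = {u, x}) \<longleftrightarrow> y \<in> X" using X_vertex by (auto simp: doubleton_eq_iff)
  moreover have "\<not> (\<exists>x\<in>X. {u, y} = {v, x})" using X_vertex uv by (auto simp: doubleton_eq_iff)
  ultimately show "y \<in> nbrs V E_moved u \<longleftrightarrow> y \<in> nbrs V E u - X"
    unfolding nbrs_def adj_def using move_edges_iff[of u y E u v X] X_vertex by auto
qed

lemma nbrs_moved_X:
  assumes x: "x \<in> X"
  shows "nbrs V E_moved x = insert v (nbrs V E x - {u})"
proof (rule set_eqI)
  fix y
  have "(\<exists>x'\<in>X. {x, y} = {u, x'}) \<longleftrightarrow> y = u" using x X_vertex[OF x] by (auto simp: doubleton_eq_iff)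
  moreover have "(\<exists>x'\<in>X. {x, y} = {v, x'}) \<longleftrightarrow> y = v" using x X_not_v[OF x] by (auto simp: doubleton_eq_iff)
  ultimately show "y \<in> nbrs V E_moved x \<longleftrightarrow> y \<in> insert v (nbrs V E x - {u})"
    unfolding nbrs_def adj_def using move_edges_iff[of x y E u v X] vV by auto
qed

lemma moved_eigen_at_u:
  assumes eq: "laplacian V E_moved f_tilde u = lam * f_tilde u"
  shows "(\<Sum>x\<in>X. f u - f x) = 0"
proof -
  have X_nbrs: "X \<subseteq> nbrs V E u" using X_edges X_vertex by (auto simp: nbrs_def adj_def)
  have same: "f_tilde y = f y" if y: "y \<in> nbrs V E u - X" for y
  proof (rule f_tilde_out, intro ballI notI)
    fix x assume x: "x \<in> X" and yx: "y \<in> branch E u x"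
    have "{y, u} \<in> E" using y by (auto simp: nbrs_def adj_def insert_commute)
    then have "y = x" using branch_leave[OF x yx _ branch_notin] by blast
    with y x show False by simp
  qed
  have "(\<Sum>y\<in>nbrs V E u - X. f u - f y) = laplacian V E_moved f_tilde u"
    unfolding laplacian_nbrs[OF simple_moved] nbrs_moved_u
    by (rule sum.cong[OF refl]) (simp add: f_tilde_u same)
  also have "\<dots> = (\<Sum>y\<in>nbrs V E u. f u - f y)"
    using eq f_eigen uV by (simp add: f_tilde_u laplacian_nbrs[OF simple, symmetric])
  also have "\<dots> = (\<Sum>y\<in>nbrs V E u - X. f u - f y) + (\<Sum>y\<in>X. f u - f y)"
    by (rule sum.subset_diff[OF X_nbrs finite_nbrs[OF finite_V]])
  finally show ?thesis by simp
qed

text \<open>Comparing the eigen-equations at x in the old and new tree: inside the flipped branch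
  the equations agree up to the sign, so the swapped neighbour must match.\<close>
lemma moved_eigen_at_X:
  assumes x: "x \<in> X" and eq: "laplacian V E_moved f_tilde x = lam * f_tilde x"
  shows "f u = flip_sign x * f v"
proof -
  have xV: "x \<in> V" using X_vertex[OF x] by simp
  have v_new: "v \<notin> nbrs V E x - {u}" using X_not_adj_v[OF x] by (auto simp: nbrs_def adj_def insert_commute)
  have u_old: "u \<in> nbrs V E x" using X_edges x uV by (auto simp: nbrs_def adj_def insert_commute)
  have fin: "finite (nbrs V E x - {u})" using finite_nbrs[OF finite_V] by simp
  have inside: "f_tilde y = flip_sign x * f y" if y: "y \<in> nbrs V E x - {u}" for y
  proof (rule f_tilde_in[OF x])
    show "y \<in> branch E u x"
    proof (rule ccontr)
      assume "y \<notin> branch E u x"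
      moreover have "{x, y} \<in> E" using y by (simp add: nbrs_def adj_def)
      ultimately have "y = u" using branch_leave[OF x in_own_branch[OF x]] by blast
      with y show False by simp
    qed
  qed
  define A where "A = (\<Sum>y\<in>nbrs V E x - {u}. f x - f y)"
  have "laplacian V E_moved f_tilde x = (f_tilde x - f_tilde v) + (\<Sum>y\<in>nbrs V E x - {u}. f_tilde x - f_tilde y)"
    unfolding laplacian_nbrs[OF simple_moved] nbrs_moved_X[OF x] by (rule sum.insert[OF fin v_new])
  also have "(\<Sum>y\<in>nbrs V E x - {u}. f_tilde x - f_tilde y) = flip_sign x * A"
    unfolding A_def sum_distrib_left
    by (rule sum.cong[OF refl]) (simp add: inside f_tilde_X[OF x] algebra_simps)
  finally have new: "(flip_sign x * f x - f v) + flip_sign x * A = lam * (flip_sign x * f x)"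
    using eq by (simp add: f_tilde_X[OF x] f_tilde_v)
  have "laplacian V E f x = (f x - f u) + A"
    unfolding laplacian_nbrs[OF simple] A_def by (rule sum.remove[OF finite_nbrs[OF finite_V] u_old])
  then have old: "(f x - f u) + A = lam * f x" using f_eigen xV by simp
  then have "flip_sign x * ((f x - f u) + A) = flip_sign x * (lam * f x)" by simp
  with new have "f v = flip_sign x * f u" by (simp add: algebra_simps)
  then have "flip_sign x * f v = (flip_sign x * flip_sign x) * f u" by simp
  then show ?thesis by (simp add: flip_sign_sq)
qed

text \<open>The two comparisons are incompatible: at u they force the sum of f u - f x to vanish,
  while at each x they force f u * f x < 0, i.e. every term f u (f u - f x) is positive.\<close>
lemma f_tilde_not_eigen:
  assumes X_ne: "X \<noteq> {}"
  shows "\<not> (\<forall>y\<in>V. laplacian V E_moved f_tilde y = lam * f_tilde y)"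
proof
  assume eq: "\<forall>y\<in>V. laplacian V E_moved f_tilde y = lam * f_tilde y"
  have "(\<Sum>x\<in>X. f u * f u - f u * f x) > 0"
  proof (rule sum_pos[OF finite_X X_ne])
    fix x assume x: "x \<in> X"
    have "f u = flip_sign x * f v" using moved_eigen_at_X[OF x] eq X_vertex[OF x] by blast
    then have "f u * f x < 0" using flip_sign_neg[OF x] by (simp add: mult.assoc)
    then show "f u * f u - f u * f x > 0" using zero_le_square[of "f u"] by linarith
  qed
  moreover have "(\<Sum>x\<in>X. f u * f u - f u * f x) = f u * (\<Sum>x\<in>X. f u - f x)"
    by (simp add: sum_distrib_left right_diff_distrib)
  moreover have "f u * (\<Sum>x\<in>X. f u - f x) = 0" using moved_eigen_at_u eq uV by simp
  ultimately show False by linarith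
qed

end

theorem lemma6:
  fixes V :: "'a set" and E :: "'a set set" and u v :: 'a and X :: "'a set"
    and f :: "'a \<Rightarrow> real"
  assumes tree: "is_tree V E"
    and uV: "u \<in> V" and vV: "v \<in> V" and uv: "u \<noteq> v"
    and X_ne: "X \<noteq> {}"
    and X_edges: "\<forall>x\<in>X. {u, x} \<in> E"
    and X_off: "\<forall>x\<in>X. \<not> on_path E u v x"
    and eig: "lap_eigenvector V E (lap_max_eig V E) f"
    and fuv: "\<bar>f u\<bar> \<le> \<bar>f v\<bar>"
  shows "lap_max_eig V ((E - (\<lambda>x. {u, x}) ` X) \<union> (\<lambda>x. {v, x}) ` X) > lap_max_eig V E"
proof -
  let ?lam = "lap_max_eig V E"
  have Vne: "V \<noteq> {}" using uV by auto
  have "simple_graph V E" using tree by (simp add: is_tree_def)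
  then interpret edge_move V E u v X f ?lam
    using tree uV vV uv X_edges X_off eig lap_max_eig_bound[OF _ Vne] by unfold_locales
  have "lap_max_eig V E_moved > ?lam"
  proof (rule ccontr)
    assume "\<not> lap_max_eig V E_moved > ?lam"
    then have bnd: "\<forall>h. supported V h \<longrightarrow> quad_form V E_moved h \<le> 2 * ?lam * norm2 V h"
      using quad_form_bound_mono[OF lap_max_eig_bound[OF simple_moved Vne]] by simp
    have "quad_form V E_moved f_tilde \<le> 2 * ?lam * norm2 V f_tilde"
      using bnd f_tilde_supported by blast
    moreover have "2 * ?lam * norm2 V f_tilde \<le> quad_form V E_moved f_tilde"
      using quad_form_moved_ge[OF fuv] eigen_quad_form[OF simple f_eigen] by (simp add: norm2_f_tilde)
    ultimately have "quad_form V E_moved f_tilde = 2 * ?lam * norm2 V f_tilde" by linarith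
    then have "\<forall>y\<in>V. laplacian V E_moved f_tilde y = ?lam * f_tilde y"
      using extremal_is_eigen[OF simple_moved f_tilde_supported bnd] by blast
    with f_tilde_not_eigen[OF X_ne] show False by blast
  qed
  then show ?thesis by (simp add: move_edges_def)
qed

end
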